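(* There exist a set $A\subseteq\mathcal B$ and a functional $F\colon A\to\mathcal B$ such that $F$ is $A$-restricted polynomial-time computable but $F$ has no total polynomial-time computable extension $\tilde F\colon\mathcal B\to\mathcal B$.
   Context: $\Sigma=\{0,1\}$, $\mathcal B=(\Sigma^* )^{\Sigma^*}$ is the set of total string functions. An oracle Turing machine $M^?$ with oracle $\varphi\in\mathcal B$ replaces, upon entering its query state, the query-tape content $\mathbf b$ by $\varphi(\mathbf b)$ in one time step; $\operatorname{time}_{M^\varphi}(\mathbf a)$ is the number of steps on input $\mathbf a$. $M^?$ computes $F\colon A\to\mathcal B$ if $M^\varphi=F(\varphi)$ for all $\varphi\in A$. The size function is $|\varphi|(n)=\max\{|\varphi(\mathbf a)|:|\mathbf a|\le n\}$. Second-order polynomials are the smallest class of functions $\mathbb N^{\mathbb N}\times\mathbb N\to\mathbb N$ containing all $(l,n)\mapsto p(n)$ for polynomials $p$ with natural coefficients and closed under pointwise sum, pointwise product, and $P\mapsto P^+$, $P^+(l,n)=l(P(l,n))$. For $A\subseteq\mathcal B$, $F\colon A\to\mathcal B$ is $A$-restricted polynomial-time computable if some oracle Turing machine $M^?$ computes $F$ and there is a second-order polynomial $P$ with $\operatorname{time}_{M^\varphi}(\mathbf a)\le P(|\varphi|,|\mathbf a|)$ for all $\varphi\in A$ and $\mathbf a\in\Sigma^*$. A total functional is polynomial-time computable if this holds with $A=\mathcal B$. *)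

theory Defs
  imports Main "HOL-Computational_Algebra.Polynomial"
begin

type_synonym str = "bool list"
type_synonym strfun = "str \<Rightarrow> str"     (* elements of the Baire-like space B *)

definition size_fun :: "strfun \<Rightarrow> nat \<Rightarrow> nat" where
  "size_fun \<phi> n = Max {length (\<phi> a) | a. length a \<le> n}"

inductive_set sopoly :: "((nat \<Rightarrow> nat) \<Rightarrow> nat \<Rightarrow> nat) set" where
  const: "(\<lambda>l n. poly (p :: nat poly) n) \<in> sopoly"
| add: "P \<in> sopoly \<Longrightarrow> Q \<in> sopoly \<Longrightarrow> (\<lambda>l n. P l n + Q l n) \<in> sopoly"
| mult: "P \<in> sopoly \<Longrightarrow> Q \<in> sopoly \<Longrightarrow> (\<lambda>l n. P l n * Q l n) \<in> sopoly"
| app: "P \<in> sopoly \<Longrightarrow> (\<lambda>l n. l (P l n)) \<in> sopoly"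

text \<open>A multi-tape oracle Turing machine with k >= 2 one-way infinite tapes over the
alphabet {0,1,blank} (blank = None). Tape 0 is the input/otm_output tape, tape 1 the
query tape. States are 0..<Q with Q >= 4: state 0 = start, 1 = halt, 2 = query,
3 = answer.\<close>

datatype move = MoveL | MoveR | Stay

type_synonym tape = "(nat \<Rightarrow> bool option) \<times> nat"
type_synonym config = "nat \<times> tape list"

record otm =
  ntapes :: nat
  nstates :: nat
  delta :: "nat \<Rightarrow> bool option list \<Rightarrow> nat \<times> (bool option \<times> move) list"

definition wf_otm :: "otm \<Rightarrow> bool" where
  "wf_otm M \<longleftrightarrow> ntapes M \<ge> 2 \<and> nstates M \<ge> 4 \<and>
     (\<forall>q < nstates M. \<forall>syms. length syms = ntapes M \<longrightarrow>
        fst (delta M q syms) < nstates M \<and> length (snd (delta M q syms)) = ntapes M)"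

definition tape_of :: "str \<Rightarrow> nat \<Rightarrow> bool option" where
  "tape_of w = (\<lambda>i. if i < length w then Some (w ! i) else None)"

definition read_tape :: "(nat \<Rightarrow> bool option) \<Rightarrow> str" where
  "read_tape f = map (\<lambda>i. the (f i)) [0..<(LEAST i. f i = None)]"

fun move_head :: "move \<Rightarrow> nat \<Rightarrow> nat" where
  "move_head MoveL h = h - 1"
| "move_head MoveR h = h + 1"
| "move_head Stay h = h"

fun act :: "tape \<Rightarrow> bool option \<times> move \<Rightarrow> tape" where
  "act (f, h) (s, m) = (f(h := s), move_head m h)"

definition init_config :: "otm \<Rightarrow> str \<Rightarrow> config" where
  "init_config M a = (0, (tape_of a, 0) # replicate (ntapes M - 1) (\<lambda>_. None, 0))"

definition step :: "otm \<Rightarrow> strfun \<Rightarrow> config \<Rightarrow> config" where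
  "step M \<phi> c = (let (q, tps) = c in
     if q = 1 then c
     else if q = 2 then
       (3, tps[1 := (tape_of (\<phi> (read_tape (fst (tps ! 1)))), 0)])
     else
       (let (q', acts) = delta M q (map (\<lambda>(f, h). f h) tps)
        in (q', map2 act tps acts)))"

definition run :: "otm \<Rightarrow> strfun \<Rightarrow> str \<Rightarrow> nat \<Rightarrow> config" where
  "run M \<phi> a n = (step M \<phi> ^^ n) (init_config M a)"

definition halts :: "otm \<Rightarrow> strfun \<Rightarrow> str \<Rightarrow> bool" where
  "halts M \<phi> a \<longleftrightarrow> (\<exists>n. fst (run M \<phi> a n) = 1)"

definition time :: "otm \<Rightarrow> strfun \<Rightarrow> str \<Rightarrow> nat" where
  "time M \<phi> a = (LEAST n. fst (run M \<phi> a n) = 1)"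

definition otm_output :: "otm \<Rightarrow> strfun \<Rightarrow> str \<Rightarrow> str" where
  "otm_output M \<phi> a = read_tape (fst (snd (run M \<phi> a (time M \<phi> a)) ! 0))"

definition computes_on :: "otm \<Rightarrow> strfun set \<Rightarrow> (strfun \<Rightarrow> strfun) \<Rightarrow> bool" where
  "computes_on M A F \<longleftrightarrow> wf_otm M \<and>
     (\<forall>\<phi>\<in>A. \<forall>a. halts M \<phi> a \<and> otm_output M \<phi> a = F \<phi> a)"

definition restricted_polytime :: "strfun set \<Rightarrow> (strfun \<Rightarrow> strfun) \<Rightarrow> bool" where
  "restricted_polytime A F \<longleftrightarrow> (\<exists>M P. computes_on M A F \<and> P \<in> sopoly \<and>
     (\<forall>\<phi>\<in>A. \<forall>a. time M \<phi> a \<le> P (size_fun \<phi>) (length a)))"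

definition polytime :: "(strfun \<Rightarrow> strfun) \<Rightarrow> bool" where
  "polytime F \<longleftrightarrow> restricted_polytime UNIV F"

end

theory Submission
  imports Defs "HOL-Real_Asymp.Real_Asymp"
begin

text \<open>
  The machine below iterates the oracle from the empty string,
  \<open>[] \<mapsto> \<phi> [] \<mapsto> \<phi> (\<phi> []) \<mapsto> \<dots>\<close>, as long as the answers start with 1, and accepts iff
  the iteration stops at a string starting with 0. Let A be the set of oracles on which it
  halts within |\<phi>|(|\<phi>|(0)) steps. The ladder of height m ([] \<mapsto> 1^m, 1^k \<mapsto> 1^(k+1) for
  k \<ge> m) has linear size, so a total polynomial-time extension, run on it with empty input,
  asks only polynomially many queries in m. Cut the ladder at an unqueried rung 1^(m+n) and
  send an unqueried string y of length m to 1^(2n+5): the long answer at y raises |\<phi>|(m) to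
  the running time 2n+5, so the result lies in A, yet the extension cannot tell it from the
  ladder, while the answer at the cut decides acceptance. An unqueried y exists because there
  are 2^m candidates.
\<close>

lemma finite_strings_length_le: "finite {a :: str. length a \<le> k}"
  using finite_lists_length_le[of "UNIV :: bool set" k] by simp

lemma read_tape_tape_of [simp]: "read_tape (tape_of w) = w"
proof -
  have "(LEAST i. tape_of w i = None) = length w"
    by (rule Least_equality) (auto simp: tape_of_def split: if_splits)
  then show ?thesis
    unfolding read_tape_def by (intro nth_equalityI) (auto simp: tape_of_def)
qed

lemma read_tape_empty [simp]: "read_tape (\<lambda>_. None) = []"
  unfolding read_tape_def by simp

lemma run_Suc: "run M \<phi> a (Suc k) = step M \<phi> (run M \<phi> a k)"
  unfolding run_def by simp

lemma run_halted_add: "fst (run M \<phi> a k) = 1 \<Longrightarrow> run M \<phi> a (k + j) = run M \<phi> a k"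
  by (induction j) (auto simp: run_Suc step_def split: prod.splits)

lemma halts_time_le: "fst (run M \<phi> a k) = 1 \<Longrightarrow> halts M \<phi> a \<and> time M \<phi> a \<le> k"
  unfolding halts_def time_def by (auto intro: Least_le)

lemma run_time_halted: "halts M \<phi> a \<Longrightarrow> fst (run M \<phi> a (time M \<phi> a)) = 1"
  unfolding halts_def time_def by (rule LeastI_ex)

lemma otm_output_eq_run:
  assumes "fst (run M \<phi> a k) = 1"
  shows "otm_output M \<phi> a = read_tape (fst (snd (run M \<phi> a k) ! 0))"
proof -
  have "time M \<phi> a \<le> k" "halts M \<phi> a" using halts_time_le[OF assms] by auto
  then have "run M \<phi> a k = run M \<phi> a (time M \<phi> a + (k - time M \<phi> a))" by simp
  also have "\<dots> = run M \<phi> a (time M \<phi> a)" by (rule run_halted_add[OF run_time_halted]) fact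
  finally show ?thesis unfolding otm_output_def by simp
qed

definition queries :: "otm \<Rightarrow> strfun \<Rightarrow> str \<Rightarrow> nat \<Rightarrow> str set" where
  "queries M \<phi> a T = (\<lambda>i. read_tape (fst (snd (run M \<phi> a i) ! 1))) `
     {i. i < T \<and> fst (run M \<phi> a i) = 2}"

lemma finite_queries: "finite (queries M \<phi> a T)"
  unfolding queries_def by simp

lemma card_queries_le: "card (queries M \<phi> a T) \<le> T"
proof -
  have "card (queries M \<phi> a T) \<le> card {i. i < T \<and> fst (run M \<phi> a i) = 2}"
    unfolding queries_def by (rule card_image_le) simp
  also have "\<dots> \<le> card {..<T}" by (rule card_mono) auto
  finally show ?thesis by simp
qed

lemma run_eq_if_agree_on_queries:
  assumes "\<forall>w \<in> queries M \<psi> a T. \<phi> w = \<psi> w" and "k \<le> T"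
  shows "run M \<phi> a k = run M \<psi> a k"
  using \<open>k \<le> T\<close>
proof (induction k)
  case 0
  then show ?case by (simp add: run_def)
next
  case (Suc k)
  let ?c = "run M \<psi> a k"
  have "fst ?c = 2 \<Longrightarrow> read_tape (fst (snd ?c ! 1)) \<in> queries M \<psi> a T"
    using Suc.prems unfolding queries_def by auto
  then have "step M \<phi> ?c = step M \<psi> ?c"
    using assms(1) by (cases ?c) (auto simp: step_def)
  then show ?case using Suc by (simp add: run_Suc)
qed

lemma otm_output_eq_if_agree_on_queries:
  assumes "fst (run M \<psi> a T) = 1" and "\<forall>w \<in> queries M \<psi> a T. \<phi> w = \<psi> w"
  shows "otm_output M \<phi> a = otm_output M \<psi> a"
proof -
  have "run M \<phi> a T = run M \<psi> a T" by (rule run_eq_if_agree_on_queries) (use assms in auto)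
  then show ?thesis using assms(1) otm_output_eq_run[of M \<phi> a T] otm_output_eq_run[of M \<psi> a T]
    by simp
qed

lemma size_fun_0: "size_fun \<phi> 0 = length (\<phi> [])"
proof -
  have "{length (\<phi> a) | a. length a \<le> 0} = {length (\<phi> [])}" by auto
  then show ?thesis unfolding size_fun_def by simp
qed

lemma finite_lengths_le: "finite {length (\<phi> a) | a :: str. length a \<le> k}"
proof -
  have "{length (\<phi> a) | a :: str. length a \<le> k} = (\<lambda>a. length (\<phi> a)) ` {a. length a \<le> k}"
    by auto
  then show ?thesis using finite_imageI[OF finite_strings_length_le] by simp
qed

lemma length_le_size_fun: "length a \<le> k \<Longrightarrow> length (\<phi> a) \<le> size_fun \<phi> k"
  unfolding size_fun_def by (rule Max_ge[OF finite_lengths_le]) blast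

lemma size_fun_le:
  assumes "\<And>a. length a \<le> k \<Longrightarrow> length (\<phi> a) \<le> B"
  shows "size_fun \<phi> k \<le> B"
  unfolding size_fun_def
proof (rule Max.boundedI[OF finite_lengths_le])
  have "length (\<phi> []) \<in> {length (\<phi> a) | a. length a \<le> k}" by auto
  then show "{length (\<phi> a) | a. length a \<le> k} \<noteq> {}" by blast
qed (use assms in blast)

lemma sopoly_mono:
  "P \<in> sopoly \<Longrightarrow> (\<And>k. l k \<le> l' k) \<Longrightarrow> mono l' \<Longrightarrow> P l n \<le> P l' n"
proof (induction P arbitrary: n rule: sopoly.induct)
  case (const p)
  then show ?case by simp
next
  case (add P Q)
  then show ?case by (simp add: add_mono)
next
  case (mult P Q)
  then show ?case by (simp add: mult_mono)
next
  case (app P)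
  have "l (P l n) \<le> l' (P l n)" by (rule app.prems)
  also have "\<dots> \<le> l' (P l' n)" using app by (simp add: monoD)
  finally show ?case .
qed

lemma poly_le_sum_coeffs_power:
  fixes p :: "nat poly"
  assumes "1 \<le> X" "x \<le> X"
  shows "poly p x \<le> (\<Sum>i\<le>degree p. coeff p i) * X ^ degree p"
proof -
  have "poly p x = (\<Sum>i\<le>degree p. coeff p i * x ^ i)" by (simp add: poly_altdef)
  also have "\<dots> \<le> (\<Sum>i\<le>degree p. coeff p i * X ^ degree p)"
  proof (rule sum_mono)
    fix i assume "i \<in> {..degree p}"
    then have "x ^ i \<le> X ^ degree p"
      using assms by (meson atMost_iff le_trans power_increasing power_mono zero_le)
    then show "coeff p i * x ^ i \<le> coeff p i * X ^ degree p" by simp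
  qed
  also have "\<dots> = (\<Sum>i\<le>degree p. coeff p i) * X ^ degree p" by (simp add: sum_distrib_right)
  finally show ?thesis .
qed

lemma sum_prod_le_power_bound:
  fixes X :: nat
  assumes "X \<ge> 1" "a \<le> c1 * X ^ d1" "b \<le> c2 * X ^ d2"
  shows "a + b \<le> (c1 + c2) * X ^ (d1 + d2)" and "a * b \<le> (c1 * c2) * X ^ (d1 + d2)"
proof -
  have "X ^ d1 \<le> X ^ (d1 + d2)" "X ^ d2 \<le> X ^ (d1 + d2)"
    using \<open>X \<ge> 1\<close> by (simp_all add: power_increasing)
  then have "c1 * X ^ d1 + c2 * X ^ d2 \<le> (c1 + c2) * X ^ (d1 + d2)"
    by (simp add: add_mono distrib_right)
  then show "a + b \<le> (c1 + c2) * X ^ (d1 + d2)" using assms(2,3) by linarith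
  have "a * b \<le> (c1 * X ^ d1) * (c2 * X ^ d2)" using assms(2,3) by (rule mult_le_mono)
  then show "a * b \<le> (c1 * c2) * X ^ (d1 + d2)" by (simp add: power_add ac_simps)
qed

lemma sopoly_linear_bound:
  "P \<in> sopoly \<Longrightarrow> \<exists>c d. \<forall>m n. P (\<lambda>k. k + m + 1) n \<le> c * (m + n + 1) ^ d"
proof (induction P rule: sopoly.induct)
  case (const p)
  show ?case by (intro exI allI) (auto intro: poly_le_sum_coeffs_power)
next
  case (add P Q)
  then obtain c1 d1 c2 d2 where
    "\<forall>m n. P (\<lambda>k. k + m + 1) n \<le> c1 * (m + n + 1) ^ d1"
    "\<forall>m n. Q (\<lambda>k. k + m + 1) n \<le> c2 * (m + n + 1) ^ d2" by blast
  then have "P (\<lambda>k. k + m + 1) n + Q (\<lambda>k. k + m + 1) n \<le> (c1 + c2) * (m + n + 1) ^ (d1 + d2)"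
    for m n by (intro sum_prod_le_power_bound(1)) simp_all
  then show ?case by blast
next
  case (mult P Q)
  then obtain c1 d1 c2 d2 where
    "\<forall>m n. P (\<lambda>k. k + m + 1) n \<le> c1 * (m + n + 1) ^ d1"
    "\<forall>m n. Q (\<lambda>k. k + m + 1) n \<le> c2 * (m + n + 1) ^ d2" by blast
  then have "P (\<lambda>k. k + m + 1) n * Q (\<lambda>k. k + m + 1) n \<le> (c1 * c2) * (m + n + 1) ^ (d1 + d2)"
    for m n by (intro sum_prod_le_power_bound(2)) simp_all
  then show ?case by blast
next
  case (app P)
  then obtain c d where "\<forall>m n. P (\<lambda>k. k + m + 1) n \<le> c * (m + n + 1) ^ d" by blast
  moreover have "m + 1 \<le> 1 * (m + n + 1) ^ 1" for m n :: nat by simp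
  ultimately have "P (\<lambda>k. k + m + 1) n + (m + 1) \<le> (c + 1) * (m + n + 1) ^ (d + 1)" for m n
    by (intro sum_prod_le_power_bound(1)) simp_all
  then show ?case by (metis add.assoc)
qed

lemma ex_poly_less_power2: "\<exists>m\<ge>1. c * (m + 1) ^ d + 1 < (2::nat) ^ m"
proof -
  have "((\<lambda>m::nat. real (c + 1) * (real m + 1) ^ d / 2 ^ m) \<longlongrightarrow> 0) at_top"
    by real_asymp
  then have "eventually (\<lambda>m::nat. real (c + 1) * (real m + 1) ^ d / 2 ^ m < 1) at_top"
    by (rule order_tendstoD) simp
  then obtain N :: nat where N: "\<forall>m\<ge>N. real (c + 1) * (real m + 1) ^ d / 2 ^ m < 1"
    by (auto simp: eventually_at_top_linorder)
  define m where "m = N + 1"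
  have "real (c + 1) * (real m + 1) ^ d < 2 ^ m"
    using N[rule_format, of m] by (simp add: m_def divide_less_eq)
  then have "(c + 1) * (m + 1) ^ d < (2::nat) ^ m"
    by (metis (mono_tags) of_nat_1 of_nat_add of_nat_less_iff of_nat_mult of_nat_numeral of_nat_power)
  moreover have "1 \<le> (m + 1) ^ d" by simp
  ultimately have "c * (m + 1) ^ d + 1 < 2 ^ m" unfolding distrib_right by linarith
  then show ?thesis by (auto simp: m_def)
qed

definition chain_delta :: "nat \<Rightarrow> bool option list \<Rightarrow> nat \<times> (bool option \<times> move) list" where
  "chain_delta q syms = (if q = 3 then
     (case syms ! 1 of
        Some True \<Rightarrow> (2, map (\<lambda>s. (s, Stay)) syms)
      | Some False \<Rightarrow> (1, [(Some True, Stay), (syms ! 1, Stay)])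
      | None \<Rightarrow> (1, map (\<lambda>s. (s, Stay)) syms))
   else (2, map (\<lambda>s. (s, Stay)) syms))"

definition chain_machine :: otm where
  "chain_machine = \<lparr>ntapes = 2, nstates = 4, delta = chain_delta\<rparr>"

lemma wf_chain_machine: "wf_otm chain_machine"
  unfolding wf_otm_def chain_machine_def chain_delta_def
  by (auto split: option.splits bool.splits)

lemma init_config_chain_machine:
  "init_config chain_machine a = (0, [(tape_of a, 0), (\<lambda>_. None, 0)])"
  unfolding init_config_def chain_machine_def by (simp add: numeral_2_eq_2)

lemma step_chain_start:
  "step chain_machine \<phi> (0, [(tout, 0), (tq, 0)]) = (2, [(tout, 0), (tq, 0)])"
  by (simp add: step_def chain_machine_def chain_delta_def)

lemma step_chain_query:
  "step chain_machine \<phi> (2, [(tout, 0), (tq, 0)]) =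
     (3, [(tout, 0), (tape_of (\<phi> (read_tape tq)), 0)])"
  by (simp add: step_def)

lemma step_chain_answer_True:
  "tq 0 = Some True \<Longrightarrow>
     step chain_machine \<phi> (3, [(tout, 0), (tq, 0)]) = (2, [(tout, 0), (tq, 0)])"
  by (simp add: step_def chain_machine_def chain_delta_def fun_upd_idem)

lemma step_chain_answer_False:
  "tq 0 = Some False \<Longrightarrow>
     step chain_machine \<phi> (3, [(tout, 0), (tq, 0)]) = (1, [(tout(0 := Some True), 0), (tq, 0)])"
  by (simp add: step_def chain_machine_def chain_delta_def fun_upd_idem)

lemma step_chain_answer_None:
  "tq 0 = None \<Longrightarrow>
     step chain_machine \<phi> (3, [(tout, 0), (tq, 0)]) = (1, [(tout, 0), (tq, 0)])"
  by (simp add: step_def chain_machine_def chain_delta_def fun_upd_idem)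

definition chain_budget :: "(nat \<Rightarrow> nat) \<Rightarrow> nat \<Rightarrow> nat" where
  "chain_budget = (\<lambda>l n. l (l 0))"

lemma chain_budget_sopoly: "chain_budget \<in> sopoly"
proof -
  have "(\<lambda>l n. l (l (poly (0 :: nat poly) n))) \<in> sopoly"
    by (intro sopoly.app sopoly.const)
  then show ?thesis by (simp add: chain_budget_def)
qed

definition fast_oracles :: "strfun set" where
  "fast_oracles = {\<phi>. \<forall>a. halts chain_machine \<phi> a \<and>
     time chain_machine \<phi> a \<le> chain_budget (size_fun \<phi>) (length a)}"

lemma restricted_polytime_fast_oracles:
  "restricted_polytime fast_oracles (otm_output chain_machine)"
  unfolding restricted_polytime_def computes_on_def
  using wf_chain_machine chain_budget_sopoly by (auto simp: fast_oracles_def)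

definition ladder :: "nat \<Rightarrow> strfun" where
  "ladder m w = (if w = [] then replicate m True
     else if (\<forall>x\<in>set w. x) \<and> m \<le> length w then replicate (Suc (length w)) True else [])"

definition cut_ladder :: "nat \<Rightarrow> nat \<Rightarrow> str \<Rightarrow> bool \<Rightarrow> strfun" where
  "cut_ladder m n y b = (ladder m)(replicate (m + n) True := (if b then [False] else []),
                                   y := replicate (2 * n + 5) True)"

lemma size_fun_ladder: "size_fun (ladder m) k \<le> k + m + 1"
  by (rule size_fun_le) (auto simp: ladder_def)

lemma cut_ladder_agrees:
  assumes "finite S" and "card S + 1 < 2 ^ m"
  shows "\<exists>n y. length y = m \<and> y \<noteq> replicate m True \<and>
           (\<forall>b. \<forall>w\<in>S. cut_ladder m n y b w = ladder m w)"
proof -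
  have "inj (\<lambda>n. replicate (m + n) True)"
    by (rule injI) (drule arg_cong[of _ _ length], simp)
  with \<open>finite S\<close> have "finite ((\<lambda>n. replicate (m + n) True) -` S)"
    by (rule finite_vimageI)
  then obtain n where n: "replicate (m + n) True \<notin> S"
    using ex_new_if_finite[OF infinite_UNIV_nat] by auto
  let ?Y = "{w :: str. length w = m}" and ?S' = "insert (replicate m True) S"
  have "card ?Y = 2 ^ m"
    using card_lists_length_eq[of "UNIV :: bool set" m] by simp
  moreover have "card ?S' \<le> card S + 1"
    using \<open>finite S\<close> by (simp add: card_insert_if)
  ultimately have "\<not> ?Y \<subseteq> ?S'"
    using assms card_mono[of ?S' ?Y] by auto
  then obtain y where y: "length y = m" "y \<noteq> replicate m True" "y \<notin> S" by blast
  have "cut_ladder m n y b w = ladder m w" if "w \<in> S" for b w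
    using that n y(3) by (auto simp: cut_ladder_def)
  with y show ?thesis by blast
qed

lemma replicate_True_neq_short:
  assumes "length y = m" "y \<noteq> replicate m True"
  shows "replicate (m + k) True \<noteq> y"
proof
  assume eq: "replicate (m + k) True = y"
  then have "m + k = m" using assms(1) by auto
  then show False using eq assms(2) by simp
qed

lemma run_cut_ladder_rung:
  assumes "m \<ge> 1" "length y = m" "y \<noteq> replicate m True" "k \<le> n"
  shows "run chain_machine (cut_ladder m n y b) a (2 + 2 * k) =
           (3, [(tape_of a, 0), (tape_of (replicate (m + k) True), 0)])"
  using \<open>k \<le> n\<close>
proof (induction k)
  case 0
  have "y \<noteq> []" using assms by auto
  then have "cut_ladder m n y b [] = replicate m True"
    using assms by (simp add: cut_ladder_def ladder_def)
  moreover have "run chain_machine \<phi> a 2 =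
      step chain_machine \<phi> (step chain_machine \<phi> (init_config chain_machine a))" for \<phi>
    by (simp add: run_def numeral_2_eq_2)
  ultimately show ?case
    by (simp add: init_config_chain_machine step_chain_start step_chain_query)
next
  case (Suc k)
  let ?\<phi> = "cut_ladder m n y b" and ?w = "replicate (m + k) True"
  have "run chain_machine ?\<phi> a (2 + 2 * Suc k) =
      step chain_machine ?\<phi> (step chain_machine ?\<phi> (run chain_machine ?\<phi> a (2 + 2 * k)))"
    by (simp add: run_Suc)
  also have "\<dots> = step chain_machine ?\<phi>
      (step chain_machine ?\<phi> (3, [(tape_of a, 0), (tape_of ?w, 0)]))"
    using Suc by simp
  also have "\<dots> = step chain_machine ?\<phi> (2, [(tape_of a, 0), (tape_of ?w, 0)])"
    using \<open>m \<ge> 1\<close> by (simp add: step_chain_answer_True tape_of_def)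
  also have "\<dots> = (3, [(tape_of a, 0), (tape_of (?\<phi> ?w), 0)])"
    by (simp add: step_chain_query)
  also have "?\<phi> ?w = replicate (m + Suc k) True"
    using Suc.prems assms replicate_True_neq_short[OF assms(2,3), of k]
    by (simp add: cut_ladder_def ladder_def)
  finally show ?case .
qed

lemma run_cut_ladder_end:
  assumes "m \<ge> 1" "length y = m" "y \<noteq> replicate m True"
  shows "run chain_machine (cut_ladder m n y b) a (2 * n + 5) =
     (1, [(if b then (tape_of a)(0 := Some True) else tape_of a, 0),
          (tape_of (if b then [False] else []), 0)])"
proof -
  let ?\<phi> = "cut_ladder m n y b" and ?w = "replicate (m + n) True"
  have "run chain_machine ?\<phi> a (2 * n + 5) = step chain_machine ?\<phi>
      (step chain_machine ?\<phi> (step chain_machine ?\<phi> (run chain_machine ?\<phi> a (2 + 2 * n))))"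
    by (simp add: run_Suc numeral_eq_Suc)
  also have "\<dots> = step chain_machine ?\<phi> (step chain_machine ?\<phi>
      (2, [(tape_of a, 0), (tape_of ?w, 0)]))"
    unfolding run_cut_ladder_rung[OF assms order_refl]
    using \<open>m \<ge> 1\<close> by (simp add: step_chain_answer_True tape_of_def)
  also have "\<dots> = step chain_machine ?\<phi> (3, [(tape_of a, 0), (tape_of (?\<phi> ?w), 0)])"
    by (simp add: step_chain_query)
  also have "?\<phi> ?w = (if b then [False] else [])"
    using replicate_True_neq_short[OF assms(2,3)] by (simp add: cut_ladder_def)
  finally show ?thesis
    by (cases b) (simp_all add: step_chain_answer_False step_chain_answer_None tape_of_def)
qed

lemma cut_ladder_fast:
  assumes "m \<ge> 1" "length y = m" "y \<noteq> replicate m True"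
  shows "cut_ladder m n y b \<in> fast_oracles"
proof -
  let ?\<phi> = "cut_ladder m n y b"
  have "y \<noteq> []" using assms by auto
  then have "?\<phi> [] = replicate m True"
    using assms by (simp add: cut_ladder_def ladder_def)
  then have "chain_budget (size_fun ?\<phi>) k = size_fun ?\<phi> m" for k
    by (simp add: chain_budget_def size_fun_0)
  moreover have "length (?\<phi> y) \<le> size_fun ?\<phi> m"
    using assms by (intro length_le_size_fun) simp
  moreover have "length (?\<phi> y) = 2 * n + 5"
    by (simp add: cut_ladder_def)
  ultimately have "2 * n + 5 \<le> chain_budget (size_fun ?\<phi>) k" for k
    by simp
  moreover have "halts chain_machine (cut_ladder m n y b) a \<and>
      time chain_machine (cut_ladder m n y b) a \<le> 2 * n + 5" for a
    by (rule halts_time_le) (simp add: run_cut_ladder_end[OF assms])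
  ultimately show ?thesis
    unfolding fast_oracles_def by (blast intro: le_trans)
qed

lemma otm_output_cut_ladder:
  assumes "m \<ge> 1" "length y = m" "y \<noteq> replicate m True"
  shows "otm_output chain_machine (cut_ladder m n y b) [] = (if b then [True] else [])"
proof -
  have "otm_output chain_machine (cut_ladder m n y b) [] =
      read_tape (fst (snd (run chain_machine (cut_ladder m n y b) [] (2 * n + 5)) ! 0))"
    by (rule otm_output_eq_run) (simp add: run_cut_ladder_end[OF assms])
  moreover have "(tape_of [])(0 := Some True) = tape_of [True]" by (auto simp: tape_of_def)
  ultimately show ?thesis by (simp add: run_cut_ladder_end[OF assms])
qed

lemma sopoly_ladder_small:
  assumes "Q \<in> sopoly"
  obtains m where "m \<ge> 1" "Q (size_fun (ladder m)) 0 + 1 < 2 ^ m"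
proof -
  obtain c d where cd: "\<forall>m n. Q (\<lambda>k. k + m + 1) n \<le> c * (m + n + 1) ^ d"
    using sopoly_linear_bound[OF assms] by blast
  obtain m where m: "m \<ge> 1" "c * (m + 1) ^ d + 1 < 2 ^ m"
    using ex_poly_less_power2 by blast
  have "Q (size_fun (ladder m)) 0 \<le> Q (\<lambda>k. k + m + 1) 0"
    by (rule sopoly_mono[OF assms], rule size_fun_ladder) (simp add: mono_def)
  also have "\<dots> \<le> c * (m + 1) ^ d" using cd[rule_format, of m 0] by simp
  finally show ?thesis using that m by simp
qed

lemma not_polytime_extension:
  assumes "\<forall>\<phi>\<in>fast_oracles. G \<phi> = otm_output chain_machine \<phi>"
  shows "\<not> polytime G"
proof
  assume "polytime G"
  then obtain M Q where M: "computes_on M UNIV G" and "Q \<in> sopoly"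
    and time_M: "\<forall>\<phi> a. time M \<phi> a \<le> Q (size_fun \<phi>) (length a)"
    unfolding polytime_def restricted_polytime_def by blast
  obtain m where m: "m \<ge> 1" "Q (size_fun (ladder m)) 0 + 1 < 2 ^ m"
    using \<open>Q \<in> sopoly\<close> by (rule sopoly_ladder_small)
  define T where "T = time M (ladder m) []"
  have halted: "fst (run M (ladder m) [] T) = 1"
    using M unfolding T_def computes_on_def by (blast intro: run_time_halted)
  have "card (queries M (ladder m) [] T) \<le> Q (size_fun (ladder m)) 0"
    using card_queries_le[of M "ladder m" "[]" T] time_M[rule_format, of "ladder m" "[]"]
    unfolding T_def by simp
  then have "card (queries M (ladder m) [] T) + 1 < 2 ^ m" using m(2) by linarith
  from cut_ladder_agrees[OF finite_queries this] obtain n y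
    where y: "length y = m" "y \<noteq> replicate m True"
      and agree: "\<And>b. \<forall>w\<in>queries M (ladder m) [] T. cut_ladder m n y b w = ladder m w"
    by blast
  have indistinguishable: "G (cut_ladder m n y b) [] = otm_output M (ladder m) []" for b
    using M otm_output_eq_if_agree_on_queries[OF halted agree]
    unfolding computes_on_def by simp
  have "G (cut_ladder m n y b) [] = (if b then [True] else [])" for b
    using assms cut_ladder_fast[OF m(1) y] otm_output_cut_ladder[OF m(1) y] by simp
  from this[of True] this[of False] show False
    unfolding indistinguishable by simp
qed

theorem mainTheorem6:
  shows "\<exists>(A :: strfun set) (F :: strfun \<Rightarrow> strfun).
           restricted_polytime A F \<and>
           \<not> (\<exists>G. (\<forall>\<phi>\<in>A. G \<phi> = F \<phi>) \<and> polytime G)"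
  using restricted_polytime_fast_oracles not_polytime_extension by blast

end
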